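(* Let $\boldsymbol{\lambda}=(\lambda,\mu,\nu^1,\dots,\nu^n)$ be a symmetric Schubert problem on $\mathrm{Gr}(m,\mathbb{C}^{2m})$. If \[ 2+\tfrac12\big(|\nu^1|+\dots+|\nu^n|+m-\ell(\lambda)-\ell(\mu)\big)\leq n, \] then \[ 2\leq\|\lambda\|+\|\mu\|+\|\nu^1\|+\dots+\|\nu^n\|-\tfrac12(m^2+m). \]
   Context: Partitions $\kappa$ satisfy $m\ge\kappa_1\ge\dots\ge\kappa_m\ge0$, $|\kappa|=\sum\kappa_i$, and $\ell(\kappa)=\max\{i:i\le\kappa_i\}$ is the number of boxes on the main diagonal of the Young diagram; $\kappa$ is symmetric if its Young diagram is symmetric about the main diagonal, and then $\|\kappa\|=\tfrac12(|\kappa|+\ell(\kappa))$. A symmetric Schubert problem on $\mathrm{Gr}(m,\mathbb{C}^{2m})$ is a list of nonempty symmetric partitions whose sizes sum to $m^2$, so here $|\lambda|+|\mu|+\sum_i|\nu^i|=m^2$. *)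

theory Defs
  imports Main Complex_Main
begin

text \<open>A partition kappa fitting in the m x m box, represented as the list
  [kappa_1, ..., kappa_m] (index i of the paper is list position i-1).\<close>

definition box_partition :: "nat \<Rightarrow> nat list \<Rightarrow> bool" where
  "box_partition m k \<longleftrightarrow> length k = m \<and> sorted_wrt (\<ge>) k \<and> (\<forall>x\<in>set k. x \<le> m)"

definition part_entry :: "nat list \<Rightarrow> nat \<Rightarrow> nat" where
  "part_entry k i = (if 1 \<le> i \<and> i \<le> length k then k ! (i - 1) else 0)"

definition part_size :: "nat list \<Rightarrow> nat" where
  "part_size k = sum_list k"

definition diag_len :: "nat list \<Rightarrow> nat" where
  "diag_len k = Max (insert 0 {i. 1 \<le> i \<and> i \<le> length k \<and> i \<le> part_entry k i})"

definition conj_entry :: "nat list \<Rightarrow> nat \<Rightarrow> nat" where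
  "conj_entry k j = card {i. 1 \<le> i \<and> i \<le> length k \<and> j \<le> part_entry k i}"

definition symmetric_partition :: "nat list \<Rightarrow> bool" where
  "symmetric_partition k \<longleftrightarrow> (\<forall>j\<ge>1. conj_entry k j = part_entry k j)"

definition sym_norm :: "nat list \<Rightarrow> real" where
  "sym_norm k = (real (part_size k) + real (diag_len k)) / 2"

definition sym_schubert_problem :: "nat \<Rightarrow> nat list \<Rightarrow> nat list \<Rightarrow> nat list list \<Rightarrow> bool" where
  "sym_schubert_problem m la mu nus \<longleftrightarrow>
     (\<forall>k\<in>set (la # mu # nus). box_partition m k \<and> symmetric_partition k \<and> part_size k > 0)
     \<and> part_size la + part_size mu + (\<Sum>k\<leftarrow>nus. part_size k) = m ^ 2"

end

theory Submission
  imports Defs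
begin

text \<open>Writing \<open>\<parallel>\<kappa>\<parallel> = (|\<kappa>| + \<ell>(\<kappa>))/2\<close>, the sizes add up to \<open>m\<^sup>2\<close>, so the claim is
  \<open>\<ell>(\<lambda>) + \<ell>(\<mu>) + \<Sum>\<ell>(\<nu>\<^sup>i) \<ge> m + 4\<close>. Every nonempty partition has \<open>|\<nu>\<^sup>i| \<ge> 1\<close> and
  \<open>\<ell>(\<nu>\<^sup>i) \<ge> 1\<close>, hence \<open>\<Sum>|\<nu>\<^sup>i| + \<Sum>\<ell>(\<nu>\<^sup>i) \<ge> 2n\<close>, which is exactly what the hypothesis needs.\<close>

lemma length_le_sum_list:
  fixes f :: "'a \<Rightarrow> 'b::linordered_semidom"
  assumes "\<And>x. x \<in> set xs \<Longrightarrow> 1 \<le> f x"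
  shows "of_nat (length xs) \<le> (\<Sum>x\<leftarrow>xs. f x)"
proof -
  have "(\<Sum>x\<leftarrow>xs. 1) \<le> (\<Sum>x\<leftarrow>xs. f x)"
    using assms by (rule sum_list_mono)
  then show ?thesis by (simp add: sum_list_triv)
qed

lemma diag_len_ge_1:
  assumes "sorted_wrt (\<ge>) k" and "part_size k > 0"
  shows "1 \<le> diag_len k"
proof -
  obtain x xs where k: "k = x # xs"
    using assms(2) by (cases k) (auto simp: part_size_def)
  have "x > 0"
  proof (rule ccontr)
    assume "\<not> x > 0"
    then have "\<forall>y\<in>set k. y = 0" using assms(1) k by auto
    then have "sum_list k = 0" by (simp add: sum_list_eq_0_iff)
    then show False using assms(2) unfolding part_size_def by linarith
  qed
  then have "1 \<in> {i. 1 \<le> i \<and> i \<le> length k \<and> i \<le> part_entry k i}"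
    using k by (auto simp: part_entry_def)
  moreover have "finite {i. 1 \<le> i \<and> i \<le> length k \<and> i \<le> part_entry k i}"
    by (rule finite_subset[of _ "{..length k}"]) auto
  ultimately show ?thesis
    unfolding diag_len_def by (meson Max_ge finite_insert insertI2)
qed

lemma sum_list_sym_norm:
  "(\<Sum>k\<leftarrow>ks. sym_norm k) =
     ((\<Sum>k\<leftarrow>ks. real (part_size k)) + (\<Sum>k\<leftarrow>ks. real (diag_len k))) / 2"
  by (induction ks) (auto simp: sym_norm_def field_simps)

theorem lemma4p14:
  fixes m n :: nat and la mu :: "nat list" and nus :: "nat list list"
  assumes "sym_schubert_problem m la mu nus"
    and "length nus = n"
    and "2 + ((\<Sum>k\<leftarrow>nus. real (part_size k)) + real m - real (diag_len la) - real (diag_len mu)) / 2 \<le> real n"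
  shows "2 \<le> sym_norm la + sym_norm mu + (\<Sum>k\<leftarrow>nus. sym_norm k) - (real m ^ 2 + real m) / 2"
proof -
  have nus: "\<And>k. k \<in> set nus \<Longrightarrow> sorted_wrt (\<ge>) k \<and> part_size k > 0"
    using assms(1) by (auto simp: sym_schubert_problem_def box_partition_def)
  have sizes: "real (part_size la) + real (part_size mu) + (\<Sum>k\<leftarrow>nus. real (part_size k)) = real m ^ 2"
  proof -
    have "part_size la + part_size mu + (\<Sum>k\<leftarrow>nus. part_size k) = m ^ 2"
      using assms(1) by (simp add: sym_schubert_problem_def)
    then have "real (part_size la + part_size mu + (\<Sum>k\<leftarrow>nus. part_size k)) = real m ^ 2"
      by simp
    then show ?thesis by (simp flip: sum_list_of_nat add: o_def)
  qed
  have "real n \<le> (\<Sum>k\<leftarrow>nus. real (diag_len k))"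
    using length_le_sum_list[of nus "\<lambda>k. real (diag_len k)"] nus diag_len_ge_1 assms(2) by force
  moreover have "real n \<le> (\<Sum>k\<leftarrow>nus. real (part_size k))"
    using length_le_sum_list[of nus "\<lambda>k. real (part_size k)"] nus assms(2) by force
  ultimately show ?thesis
    using sizes assms(3) unfolding sum_list_sym_norm unfolding sym_norm_def by (simp add: field_simps)
qed

end
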